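(* Let $\mathfrak l$ be a real finite-dimensional nilpotent Lie algebra with $\dim\mathfrak l'=2$ and $\mathfrak l'\subset\mathfrak z(\mathfrak l)$. Then there exists a 3-dimensional subspace $\bar{\mathfrak l}\subset\mathfrak l$ with $[\bar{\mathfrak l},\bar{\mathfrak l}]=\mathfrak l'$. Moreover, one can choose a basis $X_1,X_2,X_3$ of $\bar{\mathfrak l}$ and a basis $Y,Z$ of $\mathfrak l'$ such that $[X_1,X_2]=Y$, $[X_1,X_3]=Z$, $[X_2,X_3]=0$.
   Context: $\mathfrak l'=[\mathfrak l,\mathfrak l]$, $\mathfrak z(\mathfrak l)$ the centre. *)

theory Defs
  imports "HOL-Analysis.Analysis"
begin

definition lie_algebra :: "('a::real_vector \<Rightarrow> 'a \<Rightarrow> 'a) \<Rightarrow> bool" where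
  "lie_algebra br \<longleftrightarrow>
     (\<forall>y. linear (\<lambda>x. br x y)) \<and> (\<forall>x. linear (\<lambda>y. br x y)) \<and>
     (\<forall>x. br x x = 0) \<and>
     (\<forall>x y z. br x (br y z) + br y (br z x) + br z (br x y) = 0)"

definition finite_dim_space :: "'a::real_vector itself \<Rightarrow> bool" where
  "finite_dim_space _ \<longleftrightarrow> (\<exists>B::'a set. finite B \<and> span B = UNIV)"

definition bracket_set :: "('a::real_vector \<Rightarrow> 'a \<Rightarrow> 'a) \<Rightarrow> 'a set \<Rightarrow> 'a set \<Rightarrow> 'a set" where
  "bracket_set br A B = span {br x y | x y. x \<in> A \<and> y \<in> B}"

definition derived_alg :: "('a::real_vector \<Rightarrow> 'a \<Rightarrow> 'a) \<Rightarrow> 'a set" where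
  "derived_alg br = bracket_set br UNIV UNIV"

definition lie_center :: "('a::real_vector \<Rightarrow> 'a \<Rightarrow> 'a) \<Rightarrow> 'a set" where
  "lie_center br = {z. \<forall>x. br z x = 0}"

fun lower_central :: "('a::real_vector \<Rightarrow> 'a \<Rightarrow> 'a) \<Rightarrow> nat \<Rightarrow> 'a set" where
  "lower_central br 0 = UNIV"
| "lower_central br (Suc k) = bracket_set br (lower_central br k) UNIV"

definition nilpotent_lie :: "('a::real_vector \<Rightarrow> 'a \<Rightarrow> 'a) \<Rightarrow> bool" where
  "nilpotent_lie br \<longleftrightarrow> (\<exists>k. lower_central br k = {0})"

end

theory Submission imports Defs begin

text \<open>
  Some \<open>ad x\<close> has two independent values \<open>[x,u], [x,v]\<close>.  Otherwise every \<open>ad\<close> has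
  rank at most one; then for a basis \<open>Y = [a,b]\<close>, \<open>Z = [c,d]\<close> of \<open>[l,l]\<close> the bracket \<open>[a,d]\<close>
  lies on the line \<open>\<real>Y\<close> (look at \<open>ad a\<close>) and on \<open>\<real>Z\<close> (look at \<open>ad d\<close>), hence
  vanishes; likewise \<open>[c,b] = 0\<close>, and then \<open>ad (a + c)\<close> maps \<open>b, d\<close> to \<open>Y, Z\<close>.
  Writing \<open>[u,v] = \<alpha>[x,u] + \<beta>[x,v]\<close>, the vectors \<open>x, u - \<beta>x, v + \<alpha>x\<close> have the
  required brackets, and applying \<open>ad x\<close> to a linear relation among them shows that
  they are independent.
\<close>

lemma lie_algebra_bilinear: "lie_algebra br \<Longrightarrow> bilinear br"
  by (simp add: lie_algebra_def bilinear_def)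

lemmas bilinear_simps =
  bilinear_ladd bilinear_radd bilinear_lsub bilinear_rsub bilinear_lmul bilinear_rmul
  bilinear_lzero bilinear_rzero bilinear_lneg bilinear_rneg

lemmas lie_bracket_simps = bilinear_simps[OF lie_algebra_bilinear]

lemma lie_algebra_bracket_self: "lie_algebra br \<Longrightarrow> br x x = 0"
  by (simp add: lie_algebra_def)

lemma lie_algebra_antisym:
  assumes "lie_algebra br"
  shows "br y x = - br x y"
proof -
  have "0 = br (x + y) (x + y)"
    using assms by (simp add: lie_algebra_bracket_self)
  also have "\<dots> = br x x + br x y + (br y x + br y y)"
    using assms by (simp add: lie_bracket_simps)
  also have "\<dots> = br x y + br y x"
    using assms by (simp add: lie_algebra_bracket_self)
  finally show ?thesis
    by (metis add.commute eq_neg_iff_add_eq_0)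
qed

lemma bracket_set_subset_derived_alg: "bracket_set br A B \<subseteq> derived_alg br"
  unfolding derived_alg_def bracket_set_def by (rule real_vector.span_mono) blast

lemma bracket_in_derived_alg: "br x y \<in> derived_alg br"
  unfolding derived_alg_def bracket_set_def by (rule real_vector.span_base) blast

definition indep_pair :: "'a::real_vector \<Rightarrow> 'a \<Rightarrow> bool" where
  "indep_pair p q \<longleftrightarrow> (\<forall>s t. s *\<^sub>R p + t *\<^sub>R q = 0 \<longrightarrow> s = 0 \<and> t = 0)"

lemma indep_pair_commute: "indep_pair q p \<longleftrightarrow> indep_pair p q"
  unfolding indep_pair_def by (subst all_comm) (simp add: add.commute conj_commute)

lemma indep_pair_uminus: "indep_pair (- p) (- q) \<longleftrightarrow> indep_pair p q"
  unfolding indep_pair_def by (metis minus_add_distrib neg_equal_0_iff_equal scaleR_minus_right)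

lemma indep_pair_nonzero:
  assumes "indep_pair p q"
  shows "p \<noteq> 0" "q \<noteq> 0"
  using assms[unfolded indep_pair_def, rule_format, of 1 0]
    assms[unfolded indep_pair_def, rule_format, of 0 1] by auto

lemma not_indep_pair_imp_multiple:
  assumes "p \<noteq> 0" "\<not> indep_pair p q"
  obtains k where "q = k *\<^sub>R p"
proof -
  obtain s t where rel: "s *\<^sub>R p + t *\<^sub>R q = 0" and "s \<noteq> 0 \<or> t \<noteq> 0"
    using assms(2) unfolding indep_pair_def by auto
  with assms(1) have "t \<noteq> 0" by auto
  from rel have tq: "t *\<^sub>R q = - s *\<^sub>R p"
    by (simp add: eq_neg_iff_add_eq_0 add.commute)
  have "q = inverse t *\<^sub>R (t *\<^sub>R q)"
    using \<open>t \<noteq> 0\<close> by simp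
  also have "\<dots> = (- s / t) *\<^sub>R p"
    by (simp add: tq divide_inverse_commute)
  finally show thesis by (rule that)
qed

lemma indep_pair_iff: "indep_pair p q \<longleftrightarrow> independent {p, q} \<and> p \<noteq> q"
proof
  assume pq: "indep_pair p q"
  have "p \<notin> span {q}"
  proof
    assume "p \<in> span {q}"
    then obtain k where "p = k *\<^sub>R q"
      by (auto simp: real_vector.span_singleton)
    then show False
      using pq[unfolded indep_pair_def, rule_format, of 1 "- k"] by simp
  qed
  with indep_pair_nonzero(2)[OF pq] show "independent {p, q} \<and> p \<noteq> q"
    by (auto simp: real_vector.independent_insert real_vector.span_base)
next
  assume "independent {p, q} \<and> p \<noteq> q"
  then have "q \<noteq> 0" and p_off_line: "p \<notin> span {q}"
    by (auto simp: real_vector.independent_insert real_vector.dependent_zero)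
  show "indep_pair p q"
  proof (rule ccontr)
    assume "\<not> indep_pair p q"
    then have "\<not> indep_pair q p"
      by (simp add: indep_pair_commute)
    then obtain k where "p = k *\<^sub>R q"
      by (rule not_indep_pair_imp_multiple[OF \<open>q \<noteq> 0\<close>])
    with p_off_line show False
      by (simp add: real_vector.span_base real_vector.span_scale)
  qed
qed

lemma not_indep_pair_both_eq_0:
  assumes "indep_pair p q" "\<not> indep_pair p w" "\<not> indep_pair q w"
  shows "w = 0"
proof -
  obtain k where k: "w = k *\<^sub>R p"
    using not_indep_pair_imp_multiple[OF indep_pair_nonzero(1)[OF assms(1)] assms(2)] .
  obtain l where l: "w = l *\<^sub>R q"
    using not_indep_pair_imp_multiple[OF indep_pair_nonzero(2)[OF assms(1)] assms(3)] .
  from k l have "k *\<^sub>R p + (- l) *\<^sub>R q = 0"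
    by simp
  with assms(1) have "k = 0"
    unfolding indep_pair_def by blast
  with k show ?thesis
    by simp
qed

lemma span_eq_independent_card_ge:
  assumes "independent B" "B \<subseteq> span C" "finite C" "card C \<le> card B"
  shows "span B = span C"
proof -
  have "C \<subseteq> span B"
  proof
    fix w assume "w \<in> C"
    show "w \<in> span B"
    proof (rule ccontr)
      assume w: "w \<notin> span B"
      then have indep: "independent (insert w B)"
        using assms(1) by (rule real_vector.independent_insertI)
      have "insert w B \<subseteq> span C"
        using assms(2) \<open>w \<in> C\<close> real_vector.span_base by blast
      with indep have "finite (insert w B) \<and> card (insert w B) \<le> card C"
        by (intro real_vector.independent_span_bound[OF assms(3)])
      moreover have "w \<notin> B"
        using w real_vector.span_base by blast
      ultimately show False
        using assms(4) by auto
    qed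
  qed
  with assms(2) show ?thesis
    by (simp only: real_vector.span_eq)
qed

lemma derived_alg_basis_of_brackets:
  assumes "dim (derived_alg br) = 2"
  obtains a b c d where "indep_pair (br a b) (br c d)" "derived_alg br = span {br a b, br c d}"
proof -
  define S where "S = {br x y | x y. x \<in> UNIV \<and> y \<in> UNIV}"
  have D: "derived_alg br = span S"
    unfolding S_def derived_alg_def bracket_set_def ..
  obtain B where B: "B \<subseteq> S" "independent B" "S \<subseteq> span B" "card B = dim S"
    using real_vector.basis_exists[of S] by blast
  have "dim S = 2"
    using assms D by (simp add: real_vector.dim_span)
  with B(4) obtain Y Z where YZ: "B = {Y, Z}" "Y \<noteq> Z"
    by (auto simp: card_2_iff)
  have "Y \<in> S" "Z \<in> S"
    using B(1) YZ(1) by auto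
  then obtain a b c d where "Y = br a b" "Z = br c d"
    unfolding S_def by blast
  moreover have "span B = span S"
    unfolding real_vector.span_eq using B(1,3) real_vector.span_superset by blast
  ultimately show thesis
    using that B(2) YZ D by (simp add: indep_pair_iff)
qed

lemma ex_ad_indep_pair:
  assumes "lie_algebra br" "indep_pair (br a b) (br c d)"
  shows "\<exists>x u v. indep_pair (br x u) (br x v)"
proof (rule ccontr)
  assume "\<not> ?thesis"
  then have rank_le_1: "\<not> indep_pair (br x u) (br x v)" for x u v
    by blast
  have cross: "br a' d' = 0" if "indep_pair (br a' b') (br c' d')" for a' b' c' d'
  proof (rule not_indep_pair_both_eq_0[OF that])
    show "\<not> indep_pair (br a' b') (br a' d')"
      by (rule rank_le_1)
    have "\<not> indep_pair (br d' c') (br d' a')"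
      by (rule rank_le_1)
    then show "\<not> indep_pair (br c' d') (br a' d')"
      using lie_algebra_antisym[OF assms(1), of c' d'] lie_algebra_antisym[OF assms(1), of a' d']
      by (simp add: indep_pair_uminus)
  qed
  have "br a d = 0"
    using cross assms(2) .
  moreover have "br c b = 0"
    using cross assms(2) indep_pair_commute by blast
  ultimately have "indep_pair (br (a + c) b) (br (a + c) d)"
    using assms by (simp add: lie_bracket_simps)
  with rank_le_1 show False
    by blast
qed

lemma lie_algebra_shift_to_commuting:
  assumes "lie_algebra br" "br u v \<in> span {br x u, br x v}"
  obtains u' v' where "br x u' = br x u" "br x v' = br x v" "br u' v' = 0"
proof -
  obtain \<alpha> \<beta> where uv: "br u v = \<alpha> *\<^sub>R br x u + \<beta> *\<^sub>R br x v"
    using assms(2) by (auto simp: real_vector.span_insert real_vector.span_singleton algebra_simps)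
  show thesis
  proof (rule that[of "u - \<beta> *\<^sub>R x" "v + \<alpha> *\<^sub>R x"])
    show "br x (u - \<beta> *\<^sub>R x) = br x u" "br x (v + \<alpha> *\<^sub>R x) = br x v"
      using assms(1) by (simp_all add: lie_bracket_simps lie_algebra_bracket_self)
    show "br (u - \<beta> *\<^sub>R x) (v + \<alpha> *\<^sub>R x) = 0"
      using assms(1) uv lie_algebra_antisym[OF assms(1), of x u]
      by (simp add: lie_bracket_simps lie_algebra_bracket_self)
  qed
qed

lemma independent_of_indep_pair_brackets:
  assumes "lie_algebra br" "indep_pair (br x y) (br x z)"
  shows "independent {x, y, z}" "card {x, y, z} = 3"
proof -
  have coeffs_0: "s = 0 \<and> t = 0" if "br x (s *\<^sub>R y + t *\<^sub>R z) = 0" for s t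
    using that assms by (simp add: lie_bracket_simps indep_pair_def)
  have yz: "indep_pair y z"
    unfolding indep_pair_def
  proof (intro allI impI)
    fix s t assume "s *\<^sub>R y + t *\<^sub>R z = 0"
    with assms(1) have "br x (s *\<^sub>R y + t *\<^sub>R z) = 0"
      by (simp add: lie_bracket_simps)
    then show "s = 0 \<and> t = 0"
      by (rule coeffs_0)
  qed
  have "x \<noteq> 0"
    using indep_pair_nonzero(1)[OF assms(2)] assms(1) by (auto simp: lie_bracket_simps)
  have x_off_plane: "x \<notin> span {y, z}"
  proof
    assume "x \<in> span {y, z}"
    then obtain s t where x: "x = s *\<^sub>R y + t *\<^sub>R z"
      by (auto simp: real_vector.span_insert real_vector.span_singleton algebra_simps)
    then have "br x (s *\<^sub>R y + t *\<^sub>R z) = 0"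
      using lie_algebra_bracket_self[OF assms(1), of x] by simp
    then have "s = 0 \<and> t = 0"
      by (rule coeffs_0)
    with x \<open>x \<noteq> 0\<close> show False
      by simp
  qed
  with yz show "independent {x, y, z}"
    by (simp add: indep_pair_iff real_vector.independent_insertI)
  from x_off_plane have "x \<notin> {y, z}"
    by (auto intro: real_vector.span_base)
  with yz show "card {x, y, z} = 3"
    by (simp add: indep_pair_iff)
qed

theorem lemma1:
  fixes br :: "'a::real_vector \<Rightarrow> 'a \<Rightarrow> 'a"
  assumes "lie_algebra br"
    and "finite_dim_space TYPE('a)"
    and "nilpotent_lie br"
    and "dim (derived_alg br) = 2"
    and "derived_alg br \<subseteq> lie_center br"
  shows "\<exists>L. subspace L \<and> dim L = 3 \<and> bracket_set br L L = derived_alg br \<and>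
           (\<exists>X1 X2 X3 Y Z. independent {X1, X2, X3} \<and> card {X1, X2, X3} = 3 \<and>
              span {X1, X2, X3} = L \<and>
              independent {Y, Z} \<and> Y \<noteq> Z \<and> span {Y, Z} = derived_alg br \<and>
              br X1 X2 = Y \<and> br X1 X3 = Z \<and> br X2 X3 = 0)"
proof -
  obtain a b c d where abcd: "indep_pair (br a b) (br c d)"
    and D_abcd: "derived_alg br = span {br a b, br c d}"
    using derived_alg_basis_of_brackets assms(4) by blast
  obtain x u v where xuv: "indep_pair (br x u) (br x v)"
    using ex_ad_indep_pair[OF assms(1) abcd] by blast
  have D: "derived_alg br = span {br x u, br x v}"
    using span_eq_independent_card_ge[of "{br x u, br x v}" "{br a b, br c d}"] xuv
    by (simp add: D_abcd [symmetric] indep_pair_iff bracket_in_derived_alg card_insert_le_m1)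
  then obtain X2 X3 where X: "br x X2 = br x u" "br x X3 = br x v" "br X2 X3 = 0"
    using lie_algebra_shift_to_commuting[OF assms(1)] bracket_in_derived_alg by metis
  define L where "L = span {x, X2, X3}"
  have indep: "independent {x, X2, X3}" "card {x, X2, X3} = 3"
    using independent_of_indep_pair_brackets[OF assms(1)] xuv X(1,2) by simp_all
  have "derived_alg br \<subseteq> bracket_set br L L"
    unfolding D X(1,2) [symmetric] L_def bracket_set_def
    by (rule real_vector.span_mono) (blast intro: real_vector.span_base)
  then have "bracket_set br L L = derived_alg br"
    using bracket_set_subset_derived_alg by blast
  moreover have "dim L = 3"
    unfolding L_def using indep by (simp add: real_vector.dim_eq_card_independent)
  moreover have "independent {br x X2, br x X3} \<and> br x X2 \<noteq> br x X3"
    using xuv X(1,2) by (simp add: indep_pair_iff)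
  ultimately show ?thesis
    using indep D X unfolding L_def by (intro exI conjI) (auto simp: real_vector.subspace_span)
qed

end
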